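(* Consider the setting in the context, with window size $w$ and threshold $b>0$. If $\widehat{I}>0$, then the stopping time $\tau_u(b):=\inf\{n>w:U_n\ge b\}$ satisfies $\tau_u(b)<\infty$ almost surely under $\mathbb{P}_1$.
   Context: Let $X_1,X_2,\dots\in\mathbb{R}^d$ be independent; under $\mathbb{P}_1$ (change-point $\nu=1$, expectation $\mathbb{E}_1$) they are i.i.d. with density $p_1$; $p_0$ is a known density; both w.r.t. a dominating measure $\mu$. A fixed density estimation procedure maps a finite collection of observations to a density w.r.t. $\mu$; for a positive integer $w$ and $n>w$, $\widehat{p}^w_n$ is its output on $X_{n-w},\dots,X_{n-1}$. Let $\widehat{Z}^w_n:=\log(\widehat{p}^w_n(X_n)/p_0(X_n))$ for $n>w$, $\widehat{I}:=\mathbb{E}_1[\widehat{Z}^w_n]$ (the same for all $n>w$), and $U_1=\dots=U_w=0$, $U_n=U_{n-1}+\widehat{Z}^w_n$ for $n>w$. *)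

theory Defs
  imports "HOL-Probability.Probability"
begin

definition Zhat :: "('b list \<Rightarrow> 'b \<Rightarrow> real) \<Rightarrow> ('b \<Rightarrow> real) \<Rightarrow> (nat \<Rightarrow> 'a \<Rightarrow> 'b) \<Rightarrow> nat \<Rightarrow> nat \<Rightarrow> 'a \<Rightarrow> real" where
  "Zhat est p0 X w n \<omega> = ln (est (map (\<lambda>i. X i \<omega>) [n - w..<n]) (X n \<omega>) / p0 (X n \<omega>))"

definition Ustat :: "('b list \<Rightarrow> 'b \<Rightarrow> real) \<Rightarrow> ('b \<Rightarrow> real) \<Rightarrow> (nat \<Rightarrow> 'a \<Rightarrow> 'b) \<Rightarrow> nat \<Rightarrow> nat \<Rightarrow> 'a \<Rightarrow> real" where
  "Ustat est p0 X w n \<omega> = (\<Sum>k\<in>{w<..n}. Zhat est p0 X w k \<omega>)"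

text \<open>tau_u(b) = inf { n > w : U_n >= b } (infimum of the empty set is infinity).\<close>
definition tau_u :: "('b list \<Rightarrow> 'b \<Rightarrow> real) \<Rightarrow> ('b \<Rightarrow> real) \<Rightarrow> (nat \<Rightarrow> 'a \<Rightarrow> 'b) \<Rightarrow> nat \<Rightarrow> real \<Rightarrow> 'a \<Rightarrow> enat" where
  "tau_u est p0 X w b \<omega> = (INF n \<in> {n. w < n \<and> b \<le> Ustat est p0 X w n \<omega>}. enat n)"

end

theory Submission
  imports Defs
begin

(* Each increment Zhat_n is a fixed measurable function of the window (X_(n-w), ..., X_n), so the
   increments are identically distributed and two of them are independent as soon as their windows
   are disjoint.  This weak dependence suffices for a weak law of large numbers: after truncating the
   increments at a level K, the centred truncated parts have a banded covariance matrix, so Chebyshev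
   bounds the probability that their sum deviates by order n; Markov does the same for the sum of the
   truncation errors, which have small mean for large K.  Since the mean I is positive, this gives
   P(U_(w+n) < b) --> 0, and the event that U never reaches b is contained in all of these events. *)

definition clip :: "real \<Rightarrow> real \<Rightarrow> real" where
  "clip K z = max (- K) (min z K)"

lemma borel_measurable_clip[measurable]:
  assumes [measurable]: "f \<in> borel_measurable M"
  shows "(\<lambda>x. clip K (f x)) \<in> borel_measurable M"
  unfolding clip_def by measurable

lemma abs_clip_le: "0 \<le> K \<Longrightarrow> \<bar>clip K z\<bar> \<le> K"
  by (auto simp: clip_def)

lemma abs_diff_clip_le: "0 \<le> K \<Longrightarrow> \<bar>z - clip K z\<bar> \<le> \<bar>z\<bar>"
  by (auto simp: clip_def)

lemma clip_eq_self: "\<bar>z\<bar> \<le> K \<Longrightarrow> clip K z = z"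
  by (auto simp: clip_def)

lemma integral_abs_diff_clip_tendsto_0:
  fixes f :: "'a \<Rightarrow> real"
  assumes "integrable M f"
  shows "(\<lambda>n. \<integral>x. \<bar>f x - clip (real n) (f x)\<bar> \<partial>M) \<longlonglongrightarrow> 0"
proof -
  have "(\<lambda>n. \<integral>x. \<bar>f x - clip (real n) (f x)\<bar> \<partial>M) \<longlonglongrightarrow> (\<integral>x. 0 \<partial>M)"
  proof (rule integral_dominated_convergence[where w="\<lambda>x. \<bar>f x\<bar>"])
    show "AE x in M. (\<lambda>n. \<bar>f x - clip (real n) (f x)\<bar>) \<longlonglongrightarrow> 0"
    proof (intro AE_I2 tendsto_eventually eventually_sequentiallyI)
      fix x n assume "nat \<lceil>\<bar>f x\<bar>\<rceil> \<le> n"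
      then show "\<bar>f x - clip (real n) (f x)\<bar> = 0" by (simp add: clip_eq_self)
    qed
  qed (use assms abs_diff_clip_le in auto)
  then show ?thesis by simp
qed

lemma (in prob_space) integral_square_sum_banded_le:
  fixes W :: "nat \<Rightarrow> 'a \<Rightarrow> real" and B :: real
  assumes "finite A"
    and meas: "\<And>k. k \<in> A \<Longrightarrow> W k \<in> borel_measurable M"
    and bound: "\<And>k \<omega>. k \<in> A \<Longrightarrow> \<omega> \<in> space M \<Longrightarrow> \<bar>W k \<omega>\<bar> \<le> B"
    and uncorrelated: "\<And>i j. i \<in> A \<Longrightarrow> j \<in> A \<Longrightarrow> i + m < j \<Longrightarrow> (\<integral>\<omega>. W i \<omega> * W j \<omega> \<partial>M) = 0"
  shows "(\<integral>\<omega>. (\<Sum>k\<in>A. W k \<omega>)\<^sup>2 \<partial>M) \<le> real (card A * (2 * m + 1)) * B\<^sup>2"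
proof -
  have prod_bound: "\<bar>W i \<omega> * W j \<omega>\<bar> \<le> B\<^sup>2" if "i \<in> A" "j \<in> A" "\<omega> \<in> space M" for i j \<omega>
    using bound[OF that(1,3)] bound[OF that(2,3)]
    by (simp add: abs_mult power2_eq_square mult_mono')
  have prod_int: "integrable M (\<lambda>\<omega>. W i \<omega> * W j \<omega>)" if "i \<in> A" "j \<in> A" for i j
    using meas[OF that(1)] meas[OF that(2)] prod_bound[OF that]
    by (intro integrable_const_bound[where B="B\<^sup>2"]) auto
  have row: "(\<Sum>j\<in>A. \<integral>\<omega>. W i \<omega> * W j \<omega> \<partial>M) \<le> (2 * m + 1) * B\<^sup>2" if "i \<in> A" for i
  proof -
    let ?band = "A \<inter> {i - m..i + m}"
    have "(\<Sum>j\<in>A. \<integral>\<omega>. W i \<omega> * W j \<omega> \<partial>M) = (\<Sum>j\<in>?band. \<integral>\<omega>. W i \<omega> * W j \<omega> \<partial>M)"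
    proof (rule sum.mono_neutral_right[OF \<open>finite A\<close>])
      show "\<forall>j\<in>A - ?band. (\<integral>\<omega>. W i \<omega> * W j \<omega> \<partial>M) = 0"
      proof
        fix j assume j: "j \<in> A - ?band"
        then consider "i + m < j" | "j + m < i" by fastforce
        then show "(\<integral>\<omega>. W i \<omega> * W j \<omega> \<partial>M) = 0"
          using that j uncorrelated[of i j] uncorrelated[of j i] by cases (auto simp: mult.commute)
      qed
    qed auto
    also have "\<dots> \<le> (\<Sum>j\<in>?band. B\<^sup>2)"
    proof (rule sum_mono)
      fix j assume "j \<in> ?band"
      then have "(\<integral>\<omega>. W i \<omega> * W j \<omega> \<partial>M) \<le> (\<integral>\<omega>. B\<^sup>2 \<partial>M)"
        using that prod_int prod_bound by (intro integral_mono) (auto simp: abs_le_iff)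
      then show "(\<integral>\<omega>. W i \<omega> * W j \<omega> \<partial>M) \<le> B\<^sup>2" by (simp add: prob_space)
    qed
    also have "\<dots> \<le> (2 * m + 1) * B\<^sup>2"
      using card_mono[of "{i - m..i + m}" ?band] by (simp add: mult_right_mono)
    finally show ?thesis .
  qed
  have "(\<integral>\<omega>. (\<Sum>k\<in>A. W k \<omega>)\<^sup>2 \<partial>M) = (\<Sum>i\<in>A. \<Sum>j\<in>A. \<integral>\<omega>. W i \<omega> * W j \<omega> \<partial>M)"
    using prod_int by (simp add: power2_eq_square sum_product Bochner_Integration.integral_sum)
  also have "\<dots> \<le> (\<Sum>i\<in>A. (2 * m + 1) * B\<^sup>2)"
    using row by (rule sum_mono)
  finally show ?thesis by (simp add: algebra_simps)
qed

lemma (in prob_space) prob_abs_sum_banded_ge_le: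
  fixes W :: "nat \<Rightarrow> 'a \<Rightarrow> real" and B t :: real
  assumes "finite A" "0 < t"
    and meas: "\<And>k. k \<in> A \<Longrightarrow> W k \<in> borel_measurable M"
    and bound: "\<And>k \<omega>. k \<in> A \<Longrightarrow> \<omega> \<in> space M \<Longrightarrow> \<bar>W k \<omega>\<bar> \<le> B"
    and uncorrelated: "\<And>i j. i \<in> A \<Longrightarrow> j \<in> A \<Longrightarrow> i + m < j \<Longrightarrow> (\<integral>\<omega>. W i \<omega> * W j \<omega> \<partial>M) = 0"
  shows "prob {\<omega>\<in>space M. t \<le> \<bar>\<Sum>k\<in>A. W k \<omega>\<bar>} \<le> real (card A * (2 * m + 1)) * B\<^sup>2 / t\<^sup>2"
proof -
  have sum_meas: "(\<lambda>\<omega>. \<Sum>k\<in>A. W k \<omega>) \<in> borel_measurable M"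
    using meas by measurable
  have "\<bar>\<Sum>k\<in>A. W k \<omega>\<bar> \<le> real (card A) * B" if "\<omega> \<in> space M" for \<omega>
    using order.trans[OF sum_abs sum_bounded_above[of A "\<lambda>k. \<bar>W k \<omega>\<bar>" B]] bound[OF _ that] by blast
  then have "\<bar>\<Sum>k\<in>A. W k \<omega>\<bar>\<^sup>2 \<le> (real (card A) * B)\<^sup>2" if "\<omega> \<in> space M" for \<omega>
    using that by (intro power_mono) auto
  then have "integrable M (\<lambda>\<omega>. (\<Sum>k\<in>A. W k \<omega>)\<^sup>2)"
    using sum_meas by (intro integrable_const_bound[where B="(real (card A) * B)\<^sup>2"]) auto
  then have "prob {\<omega>\<in>space M. t \<le> \<bar>\<Sum>k\<in>A. W k \<omega>\<bar>} \<le> (\<integral>\<omega>. (\<Sum>k\<in>A. W k \<omega>)\<^sup>2 \<partial>M) / t\<^sup>2"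
    using sum_meas \<open>0 < t\<close> by (intro second_moment_method) auto
  also have "\<dots> \<le> real (card A * (2 * m + 1)) * B\<^sup>2 / t\<^sup>2"
    using integral_square_sum_banded_le[OF assms(1) meas bound uncorrelated]
    by (intro divide_right_mono) auto
  finally show ?thesis .
qed

lemma (in prob_space) prob_abs_sum_ge_le:
  fixes R :: "nat \<Rightarrow> 'a \<Rightarrow> real" and \<delta> t :: real
  assumes "finite A" "0 < t"
    and integrable: "\<And>k. k \<in> A \<Longrightarrow> integrable M (R k)"
    and small: "\<And>k. k \<in> A \<Longrightarrow> (\<integral>\<omega>. \<bar>R k \<omega>\<bar> \<partial>M) \<le> \<delta>"
  shows "prob {\<omega>\<in>space M. t \<le> \<bar>\<Sum>k\<in>A. R k \<omega>\<bar>} \<le> real (card A) * \<delta> / t"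
proof -
  have "prob {\<omega>\<in>space M. t \<le> \<bar>\<Sum>k\<in>A. R k \<omega>\<bar>} \<le> (\<integral>\<omega>. \<bar>\<Sum>k\<in>A. R k \<omega>\<bar> \<partial>M) / t"
    using integrable \<open>0 < t\<close> by (intro integral_Markov_inequality_measure[where A="space M"]) auto
  also have "\<dots> \<le> (\<integral>\<omega>. (\<Sum>k\<in>A. \<bar>R k \<omega>\<bar>) \<partial>M) / t"
    using integrable \<open>0 < t\<close> by (intro divide_right_mono integral_mono) (auto simp: sum_abs)
  also have "\<dots> = (\<Sum>k\<in>A. \<integral>\<omega>. \<bar>R k \<omega>\<bar> \<partial>M) / t"
    using integrable by (simp add: Bochner_Integration.integral_sum)
  also have "\<dots> \<le> real (card A) * \<delta> / t"
    using small sum_bounded_above[of A "\<lambda>k. \<integral>\<omega>. \<bar>R k \<omega>\<bar> \<partial>M" \<delta>] \<open>0 < t\<close>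
    by (intro divide_right_mono) auto
  finally show ?thesis .
qed

text \<open>Only pairwise independence of variables more than \<open>m\<close> steps apart is assumed, which is
  weaker than the usual notion of an \<open>m\<close>-dependent sequence.\<close>
locale m_dependent_ident_distr = prob_space +
  fixes Y :: "nat \<Rightarrow> 'a \<Rightarrow> real" and m :: nat
  assumes measurable_Y[measurable]: "\<And>k. Y k \<in> borel_measurable M"
    and distr_Y: "\<And>k. distr M borel (Y k) = distr M borel (Y 0)"
    and indep_var_Y: "\<And>i j. i + m < j \<Longrightarrow> indep_var borel (Y i) borel (Y j)"
    and integrable_Y: "integrable M (Y 0)"
begin

lemma integral_comp_Y:
  fixes h :: "real \<Rightarrow> real"
  assumes "h \<in> borel_measurable borel"
  shows "(\<integral>\<omega>. h (Y k \<omega>) \<partial>M) = (\<integral>\<omega>. h (Y 0 \<omega>) \<partial>M)"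
proof -
  have "(\<integral>\<omega>. h (Y k \<omega>) \<partial>M) = integral\<^sup>L (distr M borel (Y k)) h"
    using integral_distr[OF measurable_Y assms] by simp
  also have "\<dots> = integral\<^sup>L (distr M borel (Y 0)) h"
    by (simp only: distr_Y[of k])
  also have "\<dots> = (\<integral>\<omega>. h (Y 0 \<omega>) \<partial>M)"
    using integral_distr[OF measurable_Y assms] by simp
  finally show ?thesis .
qed

lemma integrable_comp_Y:
  fixes h :: "real \<Rightarrow> real"
  assumes "h \<in> borel_measurable borel"
  shows "integrable M (\<lambda>\<omega>. h (Y k \<omega>)) \<longleftrightarrow> integrable M (\<lambda>\<omega>. h (Y 0 \<omega>))"
proof -
  have "integrable M (\<lambda>\<omega>. h (Y k \<omega>)) \<longleftrightarrow> integrable (distr M borel (Y k)) h"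
    using integrable_distr_eq[OF measurable_Y assms] by simp
  also have "\<dots> \<longleftrightarrow> integrable (distr M borel (Y 0)) h"
    by (simp only: distr_Y[of k])
  also have "\<dots> \<longleftrightarrow> integrable M (\<lambda>\<omega>. h (Y 0 \<omega>))"
    using integrable_distr_eq[OF measurable_Y assms] by simp
  finally show ?thesis .
qed

lemma integrable_clip_Y: "0 \<le> K \<Longrightarrow> integrable M (\<lambda>\<omega>. clip K (Y k \<omega>))"
  using abs_clip_le by (intro integrable_const_bound[where B=K]) auto

lemma prob_abs_sum_clip_centered_ge_le:
  assumes "0 \<le> K" "0 < t"
  shows "prob {\<omega>\<in>space M. t \<le> \<bar>\<Sum>k<n. clip K (Y k \<omega>) - (\<integral>\<omega>. clip K (Y 0 \<omega>) \<partial>M)\<bar>}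
    \<le> real (n * (2 * m + 1)) * (2 * K)\<^sup>2 / t\<^sup>2"
proof -
  define \<mu> where "\<mu> = (\<integral>\<omega>. clip K (Y 0 \<omega>) \<partial>M)"
  define W where "W k \<omega> = clip K (Y k \<omega>) - \<mu>" for k \<omega>
  have W_meas[measurable]: "W k \<in> borel_measurable M" for k
    unfolding W_def by measurable
  have "\<bar>\<mu>\<bar> \<le> K"
    unfolding \<mu>_def using abs_clip_le[OF \<open>0 \<le> K\<close>] integrable_clip_Y[OF \<open>0 \<le> K\<close>]
    by (intro order.trans[OF integral_abs_bound] integral_le_const) auto
  then have W_bound: "\<bar>W k \<omega>\<bar> \<le> 2 * K" for k \<omega>
    using abs_clip_le[OF \<open>0 \<le> K\<close>, of "Y k \<omega>"] unfolding W_def by linarith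
  have W_int: "integrable M (W k)" for k
    using W_bound by (intro integrable_const_bound[where B="2 * K"]) auto
  have "(\<integral>\<omega>. W k \<omega> \<partial>M) = (\<integral>\<omega>. clip K (Y 0 \<omega>) - \<mu> \<partial>M)" for k
    unfolding W_def by (rule integral_comp_Y) measurable
  also have "\<dots> = 0"
    using integrable_clip_Y[OF \<open>0 \<le> K\<close>] unfolding \<mu>_def
    by (simp add: Bochner_Integration.integral_diff prob_space)
  finally have W_mean: "(\<integral>\<omega>. W k \<omega> \<partial>M) = 0" for k .
  have uncorrelated: "(\<integral>\<omega>. W i \<omega> * W j \<omega> \<partial>M) = 0" if "i + m < j" for i j
  proof -
    have W_comp: "W k = (\<lambda>z. clip K z - \<mu>) \<circ> Y k" for k
      by (simp add: W_def fun_eq_iff)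
    have "indep_var borel (W i) borel (W j)"
      unfolding W_comp by (rule indep_var_compose[OF indep_var_Y[OF that]]) measurable
    then show ?thesis
      using indep_var_lebesgue_integral[OF _ W_int W_int] W_mean by simp
  qed
  have "prob {\<omega>\<in>space M. t \<le> \<bar>\<Sum>k<n. W k \<omega>\<bar>} \<le> real (card {..<n} * (2 * m + 1)) * (2 * K)\<^sup>2 / t\<^sup>2"
    by (rule prob_abs_sum_banded_ge_le[OF _ \<open>0 < t\<close> W_meas W_bound uncorrelated]) simp
  then show ?thesis
    unfolding W_def \<mu>_def card_lessThan .
qed

lemma prob_abs_sum_clip_error_ge_le:
  assumes "0 \<le> K" "0 < t"
  shows "prob {\<omega>\<in>space M. t \<le> \<bar>\<Sum>k<n. Y k \<omega> - clip K (Y k \<omega>)\<bar>}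
    \<le> real n * (\<integral>\<omega>. \<bar>Y 0 \<omega> - clip K (Y 0 \<omega>)\<bar> \<partial>M) / t"
proof -
  have "integrable M (\<lambda>\<omega>. Y 0 \<omega> - clip K (Y 0 \<omega>))"
    using Bochner_Integration.integrable_diff[OF integrable_Y integrable_clip_Y[OF \<open>0 \<le> K\<close>]] .
  then have "integrable M (\<lambda>\<omega>. Y k \<omega> - clip K (Y k \<omega>))" for k
    using integrable_comp_Y[of "\<lambda>z. z - clip K z" k] by simp
  moreover have "(\<integral>\<omega>. \<bar>Y k \<omega> - clip K (Y k \<omega>)\<bar> \<partial>M) \<le> (\<integral>\<omega>. \<bar>Y 0 \<omega> - clip K (Y 0 \<omega>)\<bar> \<partial>M)" for k
    by (rule eq_refl, rule integral_comp_Y) measurable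
  ultimately have "prob {\<omega>\<in>space M. t \<le> \<bar>\<Sum>k<n. Y k \<omega> - clip K (Y k \<omega>)\<bar>}
      \<le> real (card {..<n}) * (\<integral>\<omega>. \<bar>Y 0 \<omega> - clip K (Y 0 \<omega>)\<bar> \<partial>M) / t"
    using \<open>0 < t\<close> by (intro prob_abs_sum_ge_le) auto
  then show ?thesis by simp
qed

lemma prob_partial_sum_below_le:
  assumes "0 \<le> K" "0 < t"
  shows "prob {\<omega>\<in>space M. (\<Sum>k<n. Y k \<omega>) < n * (\<integral>\<omega>. clip K (Y 0 \<omega>) \<partial>M) - 2 * t}
    \<le> real (n * (2 * m + 1)) * (2 * K)\<^sup>2 / t\<^sup>2 + real n * (\<integral>\<omega>. \<bar>Y 0 \<omega> - clip K (Y 0 \<omega>)\<bar> \<partial>M) / t"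
proof -
  define \<mu> where "\<mu> = (\<integral>\<omega>. clip K (Y 0 \<omega>) \<partial>M)"
  let ?centered = "{\<omega>\<in>space M. t \<le> \<bar>\<Sum>k<n. clip K (Y k \<omega>) - \<mu>\<bar>}"
  let ?error = "{\<omega>\<in>space M. t \<le> \<bar>\<Sum>k<n. Y k \<omega> - clip K (Y k \<omega>)\<bar>}"
  have "(\<Sum>k<n. Y k \<omega>) = (\<Sum>k<n. clip K (Y k \<omega>) - \<mu>) + (\<Sum>k<n. Y k \<omega> - clip K (Y k \<omega>)) + n * \<mu>" for \<omega>
    by (simp add: sum_subtractf)
  then have "{\<omega>\<in>space M. (\<Sum>k<n. Y k \<omega>) < n * \<mu> - 2 * t} \<subseteq> ?centered \<union> ?error"
    by (force simp: not_le abs_less_iff)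
  then have "prob {\<omega>\<in>space M. (\<Sum>k<n. Y k \<omega>) < n * \<mu> - 2 * t} \<le> prob (?centered \<union> ?error)"
    by (intro finite_measure_mono) measurable
  also have "\<dots> \<le> prob ?centered + prob ?error"
    by (intro measure_Un_le) measurable
  also have "\<dots> \<le> real (n * (2 * m + 1)) * (2 * K)\<^sup>2 / t\<^sup>2 + real n * (\<integral>\<omega>. \<bar>Y 0 \<omega> - clip K (Y 0 \<omega>)\<bar> \<partial>M) / t"
    unfolding \<mu>_def using assms
    by (intro add_mono prob_abs_sum_clip_centered_ge_le prob_abs_sum_clip_error_ge_le)
  finally show ?thesis
    unfolding \<mu>_def .
qed

lemma obtain_clip_level:
  assumes "0 < \<delta>"
  obtains K where "0 \<le> K" "(\<integral>\<omega>. \<bar>Y 0 \<omega> - clip K (Y 0 \<omega>)\<bar> \<partial>M) < \<delta>"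
    "\<bar>(\<integral>\<omega>. Y 0 \<omega> \<partial>M) - (\<integral>\<omega>. clip K (Y 0 \<omega>) \<partial>M)\<bar> < \<delta>"
proof -
  obtain n where n: "(\<integral>\<omega>. \<bar>Y 0 \<omega> - clip (real n) (Y 0 \<omega>)\<bar> \<partial>M) < \<delta>"
    using order_tendstoD(2)[OF integral_abs_diff_clip_tendsto_0[OF integrable_Y] assms]
    by (auto simp: eventually_sequentially)
  have "(\<integral>\<omega>. Y 0 \<omega> \<partial>M) - (\<integral>\<omega>. clip (real n) (Y 0 \<omega>) \<partial>M)
      = (\<integral>\<omega>. Y 0 \<omega> - clip (real n) (Y 0 \<omega>) \<partial>M)"
    using integrable_Y integrable_clip_Y[of "real n"] by (simp add: Bochner_Integration.integral_diff)
  then have "\<bar>(\<integral>\<omega>. Y 0 \<omega> \<partial>M) - (\<integral>\<omega>. clip (real n) (Y 0 \<omega>) \<partial>M)\<bar> < \<delta>"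
    using integral_abs_bound n by (metis order.strict_trans1)
  with n show ?thesis
    using that[of "real n"] by simp
qed

lemma prob_partial_sum_below_quarter_le:
  fixes K I :: real
  assumes "0 \<le> K" "0 < I" "0 < n" and \<mu>: "3 * I / 4 \<le> (\<integral>\<omega>. clip K (Y 0 \<omega>) \<partial>M)"
  shows "prob {\<omega>\<in>space M. (\<Sum>k<n. Y k \<omega>) < n * I / 4}
    \<le> 64 * (2 * m + 1) * K\<^sup>2 / (n * I\<^sup>2) + 4 * (\<integral>\<omega>. \<bar>Y 0 \<omega> - clip K (Y 0 \<omega>)\<bar> \<partial>M) / I"
proof -
  define t where "t = n * I / 4"
  have "0 < t"
    using assms by (simp add: t_def)
  have "n * I / 4 \<le> n * (\<integral>\<omega>. clip K (Y 0 \<omega>) \<partial>M) - 2 * t"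
    using mult_left_mono[OF \<mu>, of "real n"] by (simp add: t_def algebra_simps)
  then have "prob {\<omega>\<in>space M. (\<Sum>k<n. Y k \<omega>) < n * I / 4}
      \<le> prob {\<omega>\<in>space M. (\<Sum>k<n. Y k \<omega>) < n * (\<integral>\<omega>. clip K (Y 0 \<omega>) \<partial>M) - 2 * t}"
    by (intro finite_measure_mono) auto
  also have "\<dots> \<le> real (n * (2 * m + 1)) * (2 * K)\<^sup>2 / t\<^sup>2
      + real n * (\<integral>\<omega>. \<bar>Y 0 \<omega> - clip K (Y 0 \<omega>)\<bar> \<partial>M) / t"
    by (rule prob_partial_sum_below_le[OF \<open>0 \<le> K\<close> \<open>0 < t\<close>])
  also have "\<dots> = 64 * (2 * m + 1) * K\<^sup>2 / (n * I\<^sup>2) + 4 * (\<integral>\<omega>. \<bar>Y 0 \<omega> - clip K (Y 0 \<omega>)\<bar> \<partial>M) / I"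
    using assms by (simp add: t_def power2_eq_square field_simps)
  finally show ?thesis .
qed

lemma eventually_prob_partial_sum_below_le:
  assumes "0 < (\<integral>\<omega>. Y 0 \<omega> \<partial>M)" and "0 < e"
  shows "eventually (\<lambda>n. prob {\<omega>\<in>space M. (\<Sum>k<n. Y k \<omega>) < b} \<le> e) sequentially"
proof -
  define I where "I = (\<integral>\<omega>. Y 0 \<omega> \<partial>M)"
  define \<delta> where "\<delta> = min (I / 4) (e * I / 8)"
  have "0 < I" "0 < \<delta>"
    using assms by (simp_all add: I_def \<delta>_def)
  obtain K where "0 \<le> K" and K: "(\<integral>\<omega>. \<bar>Y 0 \<omega> - clip K (Y 0 \<omega>)\<bar> \<partial>M) < \<delta>"
    and "\<bar>I - (\<integral>\<omega>. clip K (Y 0 \<omega>) \<partial>M)\<bar> < \<delta>"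
    unfolding I_def by (rule obtain_clip_level[OF \<open>0 < \<delta>\<close>])
  then have \<mu>: "3 * I / 4 \<le> (\<integral>\<omega>. clip K (Y 0 \<omega>) \<partial>M)"
    unfolding \<delta>_def by linarith
  obtain N :: nat where N: "max (4 * b / I) (128 * (2 * m + 1) * K\<^sup>2 / (I\<^sup>2 * e)) \<le> N"
    using real_arch_simple by blast
  show ?thesis
  proof (rule eventually_sequentiallyI[of "Suc N"])
    fix n assume "Suc N \<le> n"
    then have "0 < n" and n: "max (4 * b / I) (128 * (2 * m + 1) * K\<^sup>2 / (I\<^sup>2 * e)) \<le> n"
      using N by linarith+
    then have "b \<le> n * I / 4"
      using \<open>0 < I\<close> by (simp add: pos_divide_le_eq mult.commute)
    then have "prob {\<omega>\<in>space M. (\<Sum>k<n. Y k \<omega>) < b} \<le> prob {\<omega>\<in>space M. (\<Sum>k<n. Y k \<omega>) < n * I / 4}"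
      by (intro finite_measure_mono) auto
    also have "\<dots> \<le> 64 * (2 * m + 1) * K\<^sup>2 / (n * I\<^sup>2) + 4 * (\<integral>\<omega>. \<bar>Y 0 \<omega> - clip K (Y 0 \<omega>)\<bar> \<partial>M) / I"
      by (rule prob_partial_sum_below_quarter_le[OF \<open>0 \<le> K\<close> \<open>0 < I\<close> \<open>0 < n\<close> \<mu>])
    also have "\<dots> \<le> e / 2 + e / 2"
    proof (rule add_mono)
      have "128 * (2 * m + 1) * K\<^sup>2 \<le> n * (I\<^sup>2 * e)"
        using n \<open>0 < I\<close> \<open>0 < e\<close> by (simp add: pos_divide_le_eq)
      then show "64 * (2 * m + 1) * K\<^sup>2 / (n * I\<^sup>2) \<le> e / 2"
        using \<open>0 < n\<close> \<open>0 < I\<close> by (simp add: pos_divide_le_eq algebra_simps)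
      show "4 * (\<integral>\<omega>. \<bar>Y 0 \<omega> - clip K (Y 0 \<omega>)\<bar> \<partial>M) / I \<le> e / 2"
        using K \<open>0 < I\<close> by (simp add: \<delta>_def pos_divide_le_eq)
    qed
    finally show "prob {\<omega>\<in>space M. (\<Sum>k<n. Y k \<omega>) < b} \<le> e"
      by simp
  qed
qed

lemma prob_partial_sum_below_tendsto_0:
  assumes "0 < (\<integral>\<omega>. Y 0 \<omega> \<partial>M)"
  shows "(\<lambda>n. prob {\<omega>\<in>space M. (\<Sum>k<n. Y k \<omega>) < b}) \<longlonglongrightarrow> 0"
proof (rule order_tendstoI)
  fix a :: real
  assume "a < 0"
  then show "eventually (\<lambda>n. a < prob {\<omega>\<in>space M. (\<Sum>k<n. Y k \<omega>) < b}) sequentially"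
    by (simp add: less_le_trans[OF _ measure_nonneg])
next
  fix a :: real
  assume "0 < a"
  show "eventually (\<lambda>n. prob {\<omega>\<in>space M. (\<Sum>k<n. Y k \<omega>) < b} < a) sequentially"
  proof (rule eventually_mono)
    show "eventually (\<lambda>n. prob {\<omega>\<in>space M. (\<Sum>k<n. Y k \<omega>) < b} \<le> a / 2) sequentially"
      using \<open>0 < a\<close> by (intro eventually_prob_partial_sum_below_le[OF assms]) simp
  qed (use \<open>0 < a\<close> in simp)
qed

lemma AE_partial_sum_ge:
  assumes "0 < (\<integral>\<omega>. Y 0 \<omega> \<partial>M)"
  shows "AE \<omega> in M. \<exists>n. b \<le> (\<Sum>k<n. Y k \<omega>)"
proof (rule AE_I)
  let ?E = "{\<omega>\<in>space M. \<forall>n. (\<Sum>k<n. Y k \<omega>) < b}"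
  show "{\<omega>\<in>space M. \<not> (\<exists>n. b \<le> (\<Sum>k<n. Y k \<omega>))} \<subseteq> ?E"
    by (auto simp: not_le)
  show "?E \<in> sets M"
    by measurable
  have "measure M ?E \<le> 0"
    by (rule LIMSEQ_le_const[OF prob_partial_sum_below_tendsto_0[OF assms]])
       (auto intro!: finite_measure_mono)
  then show "emeasure M ?E = 0"
    by (simp add: emeasure_eq_measure measure_le_0_iff)
qed

end

lemma (in prob_space) indep_sets_reindex:
  assumes inj: "inj_on f I" and ind: "indep_sets F (f ` I)"
  shows "indep_sets (\<lambda>i. F (f i)) I"
  unfolding indep_sets_def
proof (intro conjI ballI allI impI)
  fix i assume "i \<in> I"
  then show "F (f i) \<subseteq> events" using ind unfolding indep_sets_def by auto
next
  fix J A assume J: "J \<subseteq> I" "J \<noteq> {}" "finite J" and A: "A \<in> Pi J (\<lambda>i. F (f i))"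
  define g where "g = inv_into J f"
  have injJ: "inj_on f J" using inj J inj_on_subset by blast
  have gf: "\<And>j. j \<in> J \<Longrightarrow> g (f j) = j" unfolding g_def using injJ by simp
  have "(\<lambda>y. A (g y)) \<in> Pi (f ` J) F" using A gf by (auto simp: Pi_iff)
  then have "prob (\<Inter>y\<in>f ` J. A (g y)) = (\<Prod>y\<in>f ` J. prob (A (g y)))"
    using ind J unfolding indep_sets_def by (metis image_is_empty image_mono finite_imageI)
  moreover have "(\<Inter>y\<in>f ` J. A (g y)) = (\<Inter>j\<in>J. A j)" using gf by auto
  moreover have "(\<Prod>y\<in>f ` J. prob (A (g y))) = (\<Prod>j\<in>J. prob (A j))"
    using gf injJ by (simp add: prod.reindex)
  ultimately show "prob (\<Inter>j\<in>J. A j) = (\<Prod>j\<in>J. prob (A j))" by simp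
qed

lemma (in prob_space) indep_vars_reindex:
  assumes "inj_on f I" and "indep_vars M' X (f ` I)"
  shows "indep_vars (\<lambda>i. M' (f i)) (\<lambda>i. X (f i)) I"
  using assms indep_sets_reindex[of f I "\<lambda>i. {X i -` A \<inter> space M | A. A \<in> sets (M' i)}"]
  unfolding indep_vars_def2 by auto

definition window :: "(nat \<Rightarrow> 'a \<Rightarrow> 'b) \<Rightarrow> nat \<Rightarrow> nat \<Rightarrow> 'a \<Rightarrow> nat \<Rightarrow> 'b" where
  "window X w k \<omega> = (\<lambda>j\<in>{..w}. X (k - w + j) \<omega>)"

lemma measurable_window:
  assumes "w \<le> k" and "\<And>i. i \<in> {k - w..k} \<Longrightarrow> X i \<in> measurable M N"
  shows "window X w k \<in> measurable M (PiM {..w} (\<lambda>_. N))"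
  unfolding window_def[abs_def] using assms(1) by (intro measurable_restrict assms(2)) auto

lemma (in prob_space) distr_window:
  assumes indep: "indep_vars (\<lambda>_. N) X I" and "w \<le> k" "{k - w..k} \<subseteq> I"
    and distr_X: "\<And>i. i \<in> I \<Longrightarrow> distr M N (X i) = Q"
  shows "distr M (PiM {..w} (\<lambda>_. N)) (window X w k) = PiM {..w} (\<lambda>_. Q)"
proof -
  have shift: "inj_on (\<lambda>j. k - w + j) {..w}" "(\<lambda>j. k - w + j) ` {..w} \<subseteq> I"
    using assms(2) by (auto simp: inj_on_def intro!: subsetD[OF assms(3)])
  have "indep_vars (\<lambda>_. N) (\<lambda>j. X (k - w + j)) {..w}"
    using indep_vars_reindex[OF shift(1) indep_vars_subset[OF indep shift(2)]] by simp
  moreover have "random_variable N (X (k - w + j))" if "j \<in> {..w}" for j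
    using indep shift(2) that unfolding indep_vars_def by blast
  ultimately have "distr M (PiM {..w} (\<lambda>_. N)) (window X w k) = (\<Pi>\<^sub>M j\<in>{..w}. distr M N (X (k - w + j)))"
    using indep_vars_iff_distr_eq_PiM'[where I="{..w}" and M'="\<lambda>_. N" and X="\<lambda>j. X (k - w + j)"]
    by (simp add: window_def[abs_def])
  also have "\<dots> = PiM {..w} (\<lambda>_. Q)"
    using shift(2) by (intro PiM_cong) (auto intro!: distr_X)
  finally show ?thesis .
qed

lemma (in prob_space) indep_var_window:
  assumes indep: "indep_vars (\<lambda>_. N) X I" and "w \<le> k" "k + w < l" "{k - w..l} \<subseteq> I"
  shows "indep_var (PiM {..w} (\<lambda>_. N)) (window X w k) (PiM {..w} (\<lambda>_. N)) (window X w l)"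
proof -
  let ?blocks = "\<lambda>k \<omega>. restrict (\<lambda>i. X i \<omega>) {k - w..k}"
  let ?shift = "\<lambda>k f. \<lambda>j\<in>{..w}. f (k - w + j)"
  have shift_meas: "?shift k \<in> measurable (PiM {k - w..k} (\<lambda>_. N)) (PiM {..w} (\<lambda>_. N))"
    if "w \<le> k" for k
    using that by (intro measurable_restrict measurable_component_singleton) auto
  have "indep_var (PiM {..w} (\<lambda>_. N)) (?shift k \<circ> ?blocks k) (PiM {..w} (\<lambda>_. N)) (?shift l \<circ> ?blocks l)"
    using assms(2,3) subsetD[OF assms(4)] shift_meas[of k] shift_meas[of l]
    by (intro indep_var_compose[OF indep_var_restrict[OF indep]]) auto
  moreover have "?shift k \<circ> ?blocks k = window X w k" "?shift l \<circ> ?blocks l = window X w l"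
    using assms by (auto simp: window_def fun_eq_iff)
  ultimately show ?thesis by simp
qed

lemma Zhat_eq_window:
  assumes "w \<le> k"
  shows "Zhat est p0 X w k \<omega> =
    ln (est (map (window X w k \<omega>) [0..<w]) (window X w k \<omega> w) / p0 (window X w k \<omega> w))"
proof -
  have "map (\<lambda>i. X i \<omega>) [k - w..<k] = map (window X w k \<omega>) [0..<w]"
    using assms by (intro nth_equalityI) (auto simp: window_def)
  then show ?thesis
    using assms by (simp add: Zhat_def window_def)
qed

lemma Ustat_add_eq_sum: "Ustat est p0 X w (w + n) \<omega> = (\<Sum>k<n. Zhat est p0 X w (Suc w + k) \<omega>)"
  unfolding Ustat_def
  by (rule sum.reindex_bij_witness[of _ "\<lambda>k. Suc w + k" "\<lambda>k. k - Suc w"]) auto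

lemma tau_u_less_infinity_iff:
  "tau_u est p0 X w b \<omega> < \<infinity> \<longleftrightarrow> (\<exists>n>w. b \<le> Ustat est p0 X w n \<omega>)"
  unfolding tau_u_def INF_less_iff by auto

lemma m_dependent_ident_distr_Zhat:
  assumes "prob_space M"
    and X_indep: "prob_space.indep_vars M (\<lambda>_. N) X {1..}"
    and X_distr: "\<And>i. i \<ge> 1 \<Longrightarrow> distr M N (X i) = Q"
    and [measurable]: "p0 \<in> borel_measurable N"
    and [measurable]: "(\<lambda>v. est (map v [0..<w]) (v w)) \<in> borel_measurable (PiM {..w} (\<lambda>_. N))"
    and "integrable M (Zhat est p0 X w (Suc w))"
  shows "m_dependent_ident_distr M (\<lambda>k. Zhat est p0 X w (Suc w + k)) w"
proof -
  interpret prob_space M by fact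
  define G where "G v = ln (est (map v [0..<w]) (v w) / p0 (v w))" for v :: "nat \<Rightarrow> 'b"
  have G_meas[measurable]: "G \<in> borel_measurable (PiM {..w} (\<lambda>_. N))"
    unfolding G_def by measurable
  have Zhat_eq: "Zhat est p0 X w (Suc w + k) = G \<circ> window X w (Suc w + k)" for k
    by (simp add: fun_eq_iff Zhat_eq_window G_def)
  have window_meas[measurable]: "window X w (Suc w + k) \<in> measurable M (PiM {..w} (\<lambda>_. N))" for k
    using X_indep unfolding indep_vars_def by (intro measurable_window) auto
  have window_distr: "distr M (PiM {..w} (\<lambda>_. N)) (window X w (Suc w + k)) = PiM {..w} (\<lambda>_. Q)" for k
    using X_distr by (intro distr_window[OF X_indep]) auto
  show ?thesis
  proof unfold_locales
    show "Zhat est p0 X w (Suc w + k) \<in> borel_measurable M" for k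
      unfolding Zhat_eq by measurable
    show "distr M borel (Zhat est p0 X w (Suc w + k)) = distr M borel (Zhat est p0 X w (Suc w + 0))" for k
      unfolding Zhat_eq using distr_distr[OF G_meas window_meas, symmetric] window_distr by metis
    show "indep_var borel (Zhat est p0 X w (Suc w + i)) borel (Zhat est p0 X w (Suc w + j))"
      if "i + w < j" for i j
      unfolding Zhat_eq using that
      by (intro indep_var_compose[OF indep_var_window[OF X_indep]] G_meas) auto
  qed (use assms in simp_all)
qed

theorem lemma7:
  fixes M :: "'a measure" and N :: "'b measure"
    and X :: "nat \<Rightarrow> 'a \<Rightarrow> 'b"
    and p0 p1 :: "'b \<Rightarrow> real"
    and est :: "'b list \<Rightarrow> 'b \<Rightarrow> real"
    and w :: nat and b :: real
  assumes P1: "prob_space M"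
    and X_meas: "\<And>i. i \<ge> 1 \<Longrightarrow> X i \<in> measurable M N"
    and X_indep: "prob_space.indep_vars M (\<lambda>_. N) X {1..}"
    and X_distr: "\<And>i. i \<ge> 1 \<Longrightarrow> distr M N (X i) = density N (\<lambda>x. ennreal (p1 x))"
    and p1_meas: "p1 \<in> borel_measurable N" and p1_nonneg: "\<And>x. x \<in> space N \<Longrightarrow> p1 x \<ge> 0"
    and p0_meas: "p0 \<in> borel_measurable N" and p0_nonneg: "\<And>x. x \<in> space N \<Longrightarrow> p0 x \<ge> 0"
    and p0_density: "(\<integral>\<^sup>+ x. ennreal (p0 x) \<partial>N) = 1"
    and est_density: "\<And>xs. set xs \<subseteq> space N \<Longrightarrow>
        (\<lambda>x. est xs x) \<in> borel_measurable N \<and> (\<forall>x\<in>space N. est xs x \<ge> 0)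
        \<and> (\<integral>\<^sup>+ x. ennreal (est xs x) \<partial>N) = 1"
    and est_meas: "(\<lambda>v. est (map v [0..<w]) (v w)) \<in> borel_measurable (PiM {..w} (\<lambda>_. N))"
    and w_pos: "w \<ge> 1"
    and b_pos: "b > 0"
    and Z_int: "integrable M (Zhat est p0 X w (w + 1))"
    and I_pos: "(\<integral>\<omega>. Zhat est p0 X w (w + 1) \<omega> \<partial>M) > 0"
  shows "AE \<omega> in M. tau_u est p0 X w b \<omega> < \<infinity>"
proof -
  interpret Y: m_dependent_ident_distr M "\<lambda>k. Zhat est p0 X w (Suc w + k)" w
    using m_dependent_ident_distr_Zhat[OF P1 X_indep X_distr p0_meas est_meas] Z_int by simp
  have "AE \<omega> in M. \<exists>n. b \<le> (\<Sum>k<n. Zhat est p0 X w (Suc w + k) \<omega>)"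
    using I_pos by (intro Y.AE_partial_sum_ge) simp
  then show ?thesis
  proof (rule AE_mp, intro AE_I2 impI)
    fix \<omega> assume "\<exists>n. b \<le> (\<Sum>k<n. Zhat est p0 X w (Suc w + k) \<omega>)"
    then obtain n where n: "b \<le> Ustat est p0 X w (w + n) \<omega>"
      by (auto simp: Ustat_add_eq_sum)
    moreover have "n \<noteq> 0"
      using n b_pos by (cases "n = 0") (simp_all add: Ustat_def)
    ultimately show "tau_u est p0 X w b \<omega> < \<infinity>"
      unfolding tau_u_less_infinity_iff by (intro exI[of _ "w + n"]) simp
  qed
qed

end
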